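(* Let $\mathbf v\in\mathbb{R}^\infty$, and let $\mathbf w=\mathbb{F}^{\rm F}\mathbf v$ and $\mathbf x=\mathbb{L}^{\rm F}\mathbf v$, where $\mathbb{F}^{\rm F}=\left(\frac{x}{1-x},\frac{x^2}{1-x}\right)$ and $\mathbb{L}^{\rm F}=\left(\frac{2-x}{1-x},\frac{x^2}{1-x}\right)$. Let $D=(1,-x)$, $\mathbb{F}^{\rm S}=(1,x(1+x))$, $\mathbb{L}^{\rm S}=(1+2x,x(1+x))$ and $C(x)=\frac{1-\sqrt{1-4x}}{2x}$. Then: (a) $\left(\frac{2-xC(x)}{xC(x)},xC(x)\right)\mathbf w=D(\mathbb{F}^{\rm S})^{-1}D\,\mathbf x$; (b) $\left(\frac{2-xC(x)}{xC(x)-2x^2C(x)^2},xC(x)\right)\mathbf w=D(\mathbb{L}^{\rm S})^{-1}D\,\mathbf x$; (c) $\left(\frac{xC(x)}{2-xC(x)},xC(x)\right)\mathbf x=D(\mathbb{F}^{\rm S})^{-1}D\,\mathbf w$; (d) $\left(\frac{xC(x)}{(1-2xC(x))(2-xC(x))},xC(x)\right)\mathbf x=D(\mathbb{L}^{\rm S})^{-1}D\,\mathbf w$.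
   Context: $\mathbb{R}^\infty$ is the space of real column vectors $[v_0,v_1,\ldots]^T$, identified with generating functions $V(x)=\sum_n v_nx^n$. For a formal power series $f(x)$ with $f(0)=0$ and a series $g(x)$, $(g(x),f(x))$ denotes the operator/infinite lower triangular matrix whose $j$-th column has generating function $g(x)f(x)^j$; it sends $\mathbf u$ with generating function $U(x)$ to the sequence with generating function $g(x)U(f(x))$. In (a) and (b) the first component $g$ is a formal Laurent series with a pole of order one at $x=0$; the product $g(x)W(xC(x))$ is nevertheless a formal power series because the generating function $W$ of $\mathbf w$ has zero constant term, and $(g,f)\mathbf w$ denotes the sequence with that generating function. Products of such matrices obey $(g,f)(h,l)=(g\cdot h(f),l(f))$, and for Riordan matrices ($g(0)\ne0$, $f'(0)\neq0$) inverses are $(g,f)^{-1}=(1/g(\bar f),\bar f)$ with $\bar f$ the compositional inverse of $f$. *)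

theory Defs
  imports "HOL-Computational_Algebra.Formal_Power_Series" "HOL-Computational_Algebra.Formal_Laurent_Series"
begin

text \<open>Vectors in R^infinity are identified with their generating functions (real fps).
  The operator (g,f) sends U to g(x) U(f(x)).\<close>
definition riordan :: "real fps \<Rightarrow> real fps \<Rightarrow> real fps \<Rightarrow> real fps" where
  "riordan g f u = g * (u oo f)"

definition riordan_inv :: "real fps \<Rightarrow> real fps \<Rightarrow> real fps \<Rightarrow> real fps" where
  "riordan_inv g f y = (THE u. riordan g f u = y)"

definition Dop :: "real fps \<Rightarrow> real fps" where
  "Dop u = riordan 1 (- fps_X) u"

text \<open>sqrt(1-4x) as the power series square root with constant term 1.\<close>
definition sqrt14 :: "real fps" where
  "sqrt14 = fps_radical (\<lambda>_ _. 1) 2 (1 - 4 * fps_X)"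

text \<open>C(x) = (1 - sqrt(1-4x))/(2x); the numerator has zero constant term, so division
  by x is the shift.\<close>
definition Cat :: "real fps" where
  "Cat = fps_shift 1 ((1 - sqrt14) / 2)"

definition FF :: "real fps \<Rightarrow> real fps" where
  "FF u = riordan (fps_X / (1 - fps_X)) (fps_X ^ 2 / (1 - fps_X)) u"
definition LF :: "real fps \<Rightarrow> real fps" where
  "LF u = riordan ((2 - fps_X) / (1 - fps_X)) (fps_X ^ 2 / (1 - fps_X)) u"

definition FS_inv :: "real fps \<Rightarrow> real fps" where
  "FS_inv u = riordan_inv 1 (fps_X * (1 + fps_X)) u"
definition LS_inv :: "real fps \<Rightarrow> real fps" where
  "LS_inv u = riordan_inv (1 + 2 * fps_X) (fps_X * (1 + fps_X)) u"

end

theory Submission imports Defs begin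

text \<open>The series \<open>c = xC(x)\<close> is the root of \<open>c = x + c\<^sup>2\<close> with \<open>c(0) = 0\<close>, which
  forces \<open>c(-x(1+x)) = -x\<close>: the series \<open>-c(-x)\<close> is the compositional inverse of \<open>x(1+x)\<close>.
  Hence conjugating \<open>(g, x(1+x))\<^sup>-\<^sup>1\<close> by \<open>D\<close> gives \<open>y \<mapsto> y(c) / g(-c)\<close>, that is
  \<open>y(c)\<close> for \<open>F\<^sup>S\<close> and \<open>y(c) / (1 - 2c)\<close> for \<open>L\<^sup>S\<close>. On the other side \<open>F\<^sup>F\<close> and \<open>L\<^sup>F\<close>
  share their second component, so \<open>(2 - x) W(x) = x X(x)\<close> for the generating functions of
  \<open>w\<close> and \<open>x\<close>; after substituting \<open>c\<close>, all four identities are rearrangements of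
  \<open>(2 - c) W(c) = c X(c)\<close>.\<close>

lemma fps_divide_mult_cancel: "(b :: 'a::field fps) $ 0 \<noteq> 0 \<Longrightarrow> a / b * b = a"
  by (simp add: fps_divide_unit inverse_mult_eq_1 mult.assoc)

lemma fps_divide_mult_eqI:
  fixes a b x y :: "'a::field fps"
  assumes "b $ 0 \<noteq> 0" and "b * y = a * x"
  shows "a / b * x = y"
proof -
  have "(a / b * x) * b = y * b"
    using assms by (simp add: fps_divide_mult_cancel mult.commute mult.left_commute)
  moreover have "b \<noteq> 0" using assms(1) by auto
  ultimately show ?thesis by simp
qed

lemma fps_to_fls_divide_mult_eqI:
  fixes a b x y :: "'a::field fps"
  assumes "b \<noteq> 0" and "b * y = a * x"
  shows "fps_to_fls a / fps_to_fls b * fps_to_fls x = fps_to_fls y"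
proof -
  have "fps_to_fls b * fps_to_fls y = fps_to_fls a * fps_to_fls x"
    by (simp only: fls_times_fps_to_fls[symmetric] assms(2))
  then show ?thesis using assms(1) by (simp add: field_simps)
qed

lemma riordan_inv_eqI:
  assumes "g \<noteq> 0" and "f $ 0 = 0" and "f $ 1 \<noteq> 0" and "riordan g f u = y"
  shows "riordan_inv g f y = u"
  unfolding riordan_inv_def
proof (rule the_equality)
  fix u' assume "riordan g f u' = y"
  with assms have "g * (u' oo f) = g * (u oo f)" by (simp add: riordan_def)
  with assms(1) have "u' oo f = u oo f" by simp
  then show "u' = u" using fps_compose_inj_right[OF assms(2,3)] by blast
qed (rule assms(4))

lemma fps_quadratic_root_unique:
  fixes d e t :: "'a::idom fps"
  assumes "d $ 0 = 0" and "e $ 0 = 0" and "d = t + d\<^sup>2" and "e = t + e\<^sup>2"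
  shows "d = e"
proof -
  have "(d - e) * (1 - (d + e)) = (d - t - d\<^sup>2) - (e - t - e\<^sup>2)"
    by (simp add: algebra_simps power2_eq_square)
  also have "\<dots> = 0" using assms(3,4) by (metis add_diff_cancel_left' diff_self)
  finally have "(d - e) * (1 - (d + e)) = 0" .
  moreover have "1 - (d + e) \<noteq> 0"
  proof
    assume "1 - (d + e) = 0"
    then have "(1 - (d + e)) $ 0 = 0" by simp
    with assms(1,2) show False by simp
  qed
  ultimately show ?thesis by simp
qed

lemma fps_shift_1_times_fps_X: "(f :: 'a::comm_ring_1 fps) $ 0 = 0 \<Longrightarrow> fps_shift 1 f * fps_X = f"
  by (rule fps_ext) auto

lemma sqrt14_square: "sqrt14\<^sup>2 = 1 - 4 * fps_X"
proof -
  have "fps_radical (\<lambda>_ _. 1) (Suc 1) (1 - 4 * fps_X) ^ Suc 1 = (1 - 4 * fps_X :: real fps)"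
    by (rule power_radical[THEN iffD1]) auto
  then show ?thesis by (simp add: sqrt14_def numeral_2_eq_2)
qed

lemma two_X_Cat: "2 * (fps_X * Cat) = 1 - sqrt14"
proof -
  have "((1 - sqrt14) / 2) $ 0 = 0" by (simp add: sqrt14_def fps_divide_unit)
  then have "fps_X * Cat = (1 - sqrt14) / 2"
    unfolding Cat_def by (subst mult.commute) (rule fps_shift_1_times_fps_X)
  then show ?thesis
    using fps_divide_mult_cancel[of 2 "1 - sqrt14"] by (simp add: mult.commute)
qed

lemma X_Cat_quadratic: "fps_X * Cat = fps_X + (fps_X * Cat)\<^sup>2"
proof -
  define c where "c = fps_X * Cat"
  have "(2 * c)\<^sup>2 = (1 - sqrt14)\<^sup>2" using two_X_Cat by (simp add: c_def)
  also have "\<dots> = 2 * (1 - sqrt14) - 4 * fps_X"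
    using sqrt14_square by (simp add: power2_diff algebra_simps)
  also have "\<dots> = 2 * (2 * c) - 4 * fps_X" using two_X_Cat by (simp add: c_def)
  finally have "4 * (c - fps_X - c\<^sup>2) = 0"
    by (simp add: algebra_simps power2_eq_square)
  moreover have "(4 :: real fps) \<noteq> 0"
    by (metis zero_neq_numeral)
  ultimately have "c - fps_X - c\<^sup>2 = 0" by (meson mult_eq_0_iff)
  then show ?thesis unfolding c_def[symmetric] by (simp add: algebra_simps)
qed

lemma X_Cat_compose_inverse: "fps_X * Cat oo - (fps_X * (1 + fps_X)) = - fps_X"
proof (rule fps_quadratic_root_unique)
  let ?f = "- (fps_X * (1 + fps_X)) :: real fps"
  have "fps_X * Cat oo ?f = (fps_X + (fps_X * Cat)\<^sup>2) oo ?f"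
    using X_Cat_quadratic by simp
  also have "\<dots> = ?f + (fps_X * Cat oo ?f)\<^sup>2"
    by (simp add: fps_compose_add_distrib fps_compose_power)
  finally show "fps_X * Cat oo ?f = ?f + (fps_X * Cat oo ?f)\<^sup>2" .
  show "- fps_X = ?f + (- fps_X)\<^sup>2" by (simp add: algebra_simps power2_eq_square)
qed simp_all

lemma Dop_compose: "f $ 0 = 0 \<Longrightarrow> Dop u oo f = u oo - f"
  by (simp add: Dop_def riordan_def fps_compose_assoc[symmetric] fps_compose_uminus)

lemma Dop_Dop: "Dop (Dop u) = u"
  unfolding Dop_def[of "Dop u"] riordan_def by (simp add: Dop_compose)

text \<open>Here \<open>-c(-x)\<close> is the compositional inverse of \<open>f\<close>, so this is the Riordan-group
  identity \<open>D (g, f)\<^sup>-\<^sup>1 D = (1 / g(-c), c)\<close>.\<close>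

lemma Dop_riordan_inv_Dop:
  fixes g f c y :: "real fps"
  assumes g0: "g $ 0 \<noteq> 0" and f0: "f $ 0 = 0" and f1: "f $ 1 \<noteq> 0"
    and c0: "c $ 0 = 0" and inv: "c oo - f = - fps_X"
  shows "(g oo - c) * Dop (riordan_inv g f (Dop y)) = y oo c"
proof -
  define R where "R = (y oo c) / (g oo - c)"
  have gc0: "(g oo - c) $ 0 \<noteq> 0" using g0 by simp
  have R: "(g oo - c) * R = y oo c"
    unfolding R_def using fps_divide_mult_cancel[OF gc0] by (simp add: mult.commute)
  have "(g oo - c) oo - f = g"
    using inv by (simp add: fps_compose_assoc[symmetric] c0 f0 fps_compose_uminus)
  then have "g * (R oo - f) = ((g oo - c) * R) oo - f"
    by (simp add: fps_compose_mult_distrib f0)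
  also have "\<dots> = y oo (c oo - f)"
    by (simp add: R fps_compose_assoc c0 f0)
  finally have "riordan g f (Dop R) = Dop y"
    by (simp only: riordan_def Dop_compose[OF f0]) (simp add: inv Dop_def riordan_def)
  then have "riordan_inv g f (Dop y) = Dop R"
    using g0 f0 f1 by (intro riordan_inv_eqI) auto
  then show ?thesis by (simp add: Dop_Dop R)
qed

lemma Dop_FS_inv_Dop: "Dop (FS_inv (Dop y)) = y oo fps_X * Cat"
  using Dop_riordan_inv_Dop[of 1, OF _ _ _ _ X_Cat_compose_inverse, of y]
  by (simp add: FS_inv_def)

lemma Dop_LS_inv_Dop: "(1 - 2 * (fps_X * Cat)) * Dop (LS_inv (Dop y)) = y oo fps_X * Cat"
proof -
  have "(1 + 2 * fps_X) oo - (fps_X * Cat) = 1 - 2 * (fps_X * Cat)"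
    by (simp add: fps_compose_add_distrib fps_compose_mult_distrib fps_compose_uminus)
  then show ?thesis
    using Dop_riordan_inv_Dop[of "1 + 2 * fps_X", OF _ _ _ _ X_Cat_compose_inverse, of y]
    by (simp add: LS_inv_def)
qed

lemma FF_LF_relation: "(2 - fps_X) * FF u = fps_X * LF u"
  by (simp add: FF_def LF_def riordan_def fps_divide_unit ac_simps)

lemma FF_LF_at_X_Cat:
  "(2 - fps_X * Cat) * (FF u oo fps_X * Cat) = fps_X * Cat * (LF u oo fps_X * Cat)"
  using arg_cong[OF FF_LF_relation[of u], of "\<lambda>p. p oo fps_X * Cat"]
  by (simp add: fps_compose_mult_distrib fps_compose_sub_distrib)

theorem theorem4p3:
  fixes v :: "real fps"
  defines "w \<equiv> FF v" and "x \<equiv> LF v"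
  defines "xC \<equiv> fps_X * Cat"
  shows "(fps_to_fls (2 - xC) / fps_to_fls xC * fps_to_fls (w oo xC)
           = fps_to_fls (Dop (FS_inv (Dop x))))
    \<and> (fps_to_fls (2 - xC) / fps_to_fls (xC - 2 * fps_X ^ 2 * Cat ^ 2) * fps_to_fls (w oo xC)
           = fps_to_fls (Dop (LS_inv (Dop x))))
    \<and> (riordan (xC / (2 - xC)) xC x = Dop (FS_inv (Dop w)))
    \<and> (riordan (xC / ((1 - 2 * xC) * (2 - xC))) xC x = Dop (LS_inv (Dop w)))"
proof -
  have key: "(2 - xC) * (w oo xC) = xC * (x oo xC)"
    unfolding w_def x_def xC_def by (rule FF_LF_at_X_Cat)
  have "xC \<noteq> 0" using X_Cat_quadratic by (auto simp: xC_def)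
  have "1 - 2 * xC \<noteq> 0" using fps_nonzeroI[of "1 - 2 * xC" 0] by (simp add: xC_def)
  have FS: "Dop (FS_inv (Dop y)) = y oo xC" for y
    unfolding xC_def by (rule Dop_FS_inv_Dop)
  have LS: "(1 - 2 * xC) * Dop (LS_inv (Dop y)) = y oo xC" for y
    unfolding xC_def by (rule Dop_LS_inv_Dop)
  have den: "xC - 2 * fps_X ^ 2 * Cat ^ 2 = xC * (1 - 2 * xC)"
    by (simp add: xC_def power2_eq_square algebra_simps)
  show ?thesis
  proof (intro conjI)
    show "fps_to_fls (2 - xC) / fps_to_fls xC * fps_to_fls (w oo xC)
        = fps_to_fls (Dop (FS_inv (Dop x)))"
      unfolding FS using \<open>xC \<noteq> 0\<close> key by (intro fps_to_fls_divide_mult_eqI) simp_all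
    show "fps_to_fls (2 - xC) / fps_to_fls (xC - 2 * fps_X ^ 2 * Cat ^ 2) * fps_to_fls (w oo xC)
        = fps_to_fls (Dop (LS_inv (Dop x)))"
      unfolding den using \<open>xC \<noteq> 0\<close> \<open>1 - 2 * xC \<noteq> 0\<close> key LS[of x]
      by (intro fps_to_fls_divide_mult_eqI) (simp_all add: mult.assoc)
    show "riordan (xC / (2 - xC)) xC x = Dop (FS_inv (Dop w))"
      unfolding riordan_def FS using key by (intro fps_divide_mult_eqI) (simp_all add: xC_def)
    show "riordan (xC / ((1 - 2 * xC) * (2 - xC))) xC x = Dop (LS_inv (Dop w))"
      unfolding riordan_def using key LS[of w]
      by (intro fps_divide_mult_eqI) (simp add: xC_def, metis mult.assoc mult.commute)
  qed
qed

end
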